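(* For $n\ge 6$ let $e(n)$ (resp. $o(n)$) be the number of partitions of $n$ with parts $p_1\ge p_2\ge\dots\ge p_k$ such that (a) $k\ge 3$; (b) the three largest parts are equal, $p_1=p_2=p_3$, this common value is at least $3$, and it is even (resp. odd); (c) the remaining parts $p_4,\dots,p_k$, if present, are distinct; (d) the fourth largest part, if present, satisfies $p_4\le p_3-2$; (e) the smallest part is not $1$. For an integer $t$ put $P_1(t)=\tfrac12(3t^2+t+4)$, $P_2(t)=\tfrac12(3(t+1)^2-t-1)$, $P_3(t)=\tfrac12(3(t+1)^2-t+3)$, $P_4(t)=\tfrac12(3(t+1)^2+t+1)$. Then for every integer $n\ge 6$: (a) $e(n)=o(n)$ if $n\notin\{P_1(t),P_2(t),P_3(t),P_4(t)\}$ for every integer $t\ge 2$; (b) $e(n)=o(n)-1$ if $n=P_1(t)$ or $n=P_4(t)$ for some integer $t\ge 2$; (c) $e(n)=o(n)+1$ if $n=P_2(t)$ or $n=P_3(t)$ for some integer $t\ge 2$. *)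

theory Defs
  imports Main
begin

definition is_partition :: "nat \<Rightarrow> nat list \<Rightarrow> bool" where
  "is_partition n ps \<longleftrightarrow> sorted_wrt (\<ge>) ps \<and> (\<forall>p\<in>set ps. 0 < p) \<and> sum_list ps = n"

definition good_partition :: "bool \<Rightarrow> nat list \<Rightarrow> bool" where
  "good_partition b ps \<longleftrightarrow>
     length ps \<ge> 3 \<and>
     ps ! 0 = ps ! 1 \<and> ps ! 1 = ps ! 2 \<and> ps ! 0 \<ge> 3 \<and> (even (ps ! 0) \<longleftrightarrow> b) \<and>
     distinct (drop 3 ps) \<and>
     (length ps \<ge> 4 \<longrightarrow> ps ! 3 + 2 \<le> ps ! 2) \<and>
     last ps \<noteq> 1"

definition e_count :: "nat \<Rightarrow> nat" where
  "e_count n = card {ps. is_partition n ps \<and> good_partition True ps}"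

definition o_count :: "nat \<Rightarrow> nat" where
  "o_count n = card {ps. is_partition n ps \<and> good_partition False ps}"

definition P1 :: "int \<Rightarrow> int" where "P1 t = (3 * t\<^sup>2 + t + 4) div 2"
definition P2 :: "int \<Rightarrow> int" where "P2 t = (3 * (t + 1)\<^sup>2 - t - 1) div 2"
definition P3 :: "int \<Rightarrow> int" where "P3 t = (3 * (t + 1)\<^sup>2 - t + 3) div 2"
definition P4 :: "int \<Rightarrow> int" where "P4 t = (3 * (t + 1)\<^sup>2 + t + 1) div 2"

end

theory Submission
  imports Defs
begin

text \<open>
  A good partition is determined by its threefold largest part a and the set S of its
  remaining parts, where S is a subset of {2..a-2} with 3a + sum S = n. Hence
  e(n) - o(n) = sum over a of (-1)^a #{S subset {2..a-2} : 3a + sum S = n}, and splitting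
  by whether 2 lies in S yields two alternating sums of the shape
  sum over m of (-1)^m #{S subset {j+1..m-d} : (j+1)m + sum S = n}, with j = d = 2.
  Classifying the sets S by whether they contain j+1 and m-d rewrites such a sum as the same
  sum for (j+1, d+1, n+d), plus telescoping terms and the boundary terms
  [n = (j+1)(j+d)] - [n = (j+1)(j+d+1)]. Iterating this recursion, the sum is +-1 exactly when
  n reaches one of the two boundary values at some stage, and 0 otherwise. For j = d = 2 the
  two families of values are P2 and P4; the shift of n by 2 turns them into P3 and P1.
  The four families are pairwise disjoint for t >= 2, which gives the three cases.
\<close>

section \<open>Counting subsets with prescribed sum\<close>

definition subset_sum_count :: "nat set \<Rightarrow> nat \<Rightarrow> nat \<Rightarrow> nat" where
  "subset_sum_count A k n = card {S. S \<subseteq> A \<and> k + \<Sum>S = n}"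

lemma subset_sum_count_empty: "subset_sum_count {} k n = of_bool (k = n)"
proof -
  have "{S. S \<subseteq> {} \<and> k + \<Sum>S = n} = (if k = n then {{}} else {})" by auto
  then show ?thesis unfolding subset_sum_count_def by simp
qed

lemma subset_sum_count_eq_0: "n < k \<Longrightarrow> subset_sum_count A k n = 0"
  unfolding subset_sum_count_def by auto

lemma subset_sum_count_insert:
  assumes "finite A" "x \<notin> A"
  shows "subset_sum_count (insert x A) k n = subset_sum_count A k n + subset_sum_count A (k + x) n"
proof -
  let ?P = "{S. S \<subseteq> A \<and> k + \<Sum>S = n}" and ?Q = "{S. S \<subseteq> A \<and> k + x + \<Sum>S = n}"
  have sum_insert: "\<Sum>(insert x S) = x + \<Sum>S" if "S \<subseteq> A" for S
    using that assms by (subst sum.insert) (auto intro: finite_subset)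
  have decomp: "{S. S \<subseteq> insert x A \<and> k + \<Sum>S = n} = ?P \<union> insert x ` ?Q"
  proof (intro equalityI subsetI)
    fix S assume S: "S \<in> {S. S \<subseteq> insert x A \<and> k + \<Sum>S = n}"
    show "S \<in> ?P \<union> insert x ` ?Q"
    proof (cases "x \<in> S")
      case True
      have "S - {x} \<subseteq> A" using S by auto
      moreover from sum_insert[OF this] have "\<Sum>S = x + \<Sum>(S - {x})" by (simp add: insert_absorb True)
      ultimately have "S - {x} \<in> ?Q" using S by simp
      then show ?thesis using insert_Diff[OF True] by blast
    qed (use S in auto)
  qed (use assms sum_insert in auto)
  have "finite ?P" "finite ?Q" using assms(1) by (auto intro: rev_finite_subset[of "Pow A"])
  moreover have "?P \<inter> insert x ` ?Q = {}" using assms(2) by auto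
  moreover have "inj_on (insert x) ?Q"
    using assms(2) by (intro inj_onI) (metis Diff_insert_absorb in_mono mem_Collect_eq)
  ultimately show ?thesis
    unfolding subset_sum_count_def decomp by (simp add: card_Un_disjoint card_image)
qed

lemma subset_sum_count_add: "subset_sum_count A (k + d) (n + d) = subset_sum_count A k n"
  unfolding subset_sum_count_def by simp

section \<open>A pentagonal-type alternating sum\<close>

definition stack_count :: "nat \<Rightarrow> nat \<Rightarrow> nat \<Rightarrow> nat \<Rightarrow> nat" where
  "stack_count j d n m = subset_sum_count {Suc j..m - d} (Suc j * m) n"

definition trimmed_count :: "nat \<Rightarrow> nat \<Rightarrow> nat \<Rightarrow> nat \<Rightarrow> nat" where
  "trimmed_count j d n m = subset_sum_count {Suc (Suc j)..m - d} (Suc j * Suc m) n"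

definition alt_stack_sum :: "nat \<Rightarrow> nat \<Rightarrow> nat \<Rightarrow> nat \<Rightarrow> int" where
  "alt_stack_sum j d n B = (\<Sum>m = j + d..B. (-1)^m * int (stack_count j d n m))"

(* Sets containing j+1 give the trimmed count at B+1; among the others, those avoiding B+1-d
   give the trimmed count at B, and removing B+1-d from the rest leaves a set counted
   for (j+1, d+1, n+d). *)
lemma stack_count_Suc:
  assumes "Suc (j + d) \<le> B"
  shows "stack_count j d n (Suc B) =
    trimmed_count j d n B + stack_count (Suc j) (Suc d) (n + d) (Suc B) + trimmed_count j d n (Suc B)"
proof -
  let ?c = "subset_sum_count" and ?k = "Suc j * Suc B"
  have "stack_count j d n (Suc B) =
      ?c {Suc (Suc j)..Suc (B - d)} ?k n + ?c {Suc (Suc j)..Suc (B - d)} (?k + Suc j) n"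
    unfolding stack_count_def using assms
    by (simp add: Suc_diff_le atLeastAtMost_insertL[symmetric] subset_sum_count_insert)
  also have "?c {Suc (Suc j)..Suc (B - d)} ?k n =
      ?c {Suc (Suc j)..B - d} ?k n + ?c {Suc (Suc j)..B - d} (?k + Suc (B - d)) n"
    using assms by (simp add: atLeastAtMostSuc_conv subset_sum_count_insert)
  also have "?c {Suc (Suc j)..B - d} (?k + Suc (B - d)) n = stack_count (Suc j) (Suc d) (n + d) (Suc B)"
    using assms subset_sum_count_add[of _ "?k + Suc (B - d)" d n, symmetric]
    by (simp add: stack_count_def algebra_simps)
  finally show ?thesis
    unfolding trimmed_count_def using assms by (simp add: Suc_diff_le algebra_simps)
qed

lemma alt_stack_sum_step:
  assumes "Suc (j + d) \<le> B"
  shows "alt_stack_sum j d n B =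
    (-1)^(j + d) * (of_bool (n = Suc j * (j + d)) - of_bool (n = Suc j * Suc (j + d)))
    + (-1)^B * int (trimmed_count j d n B) + alt_stack_sum (Suc j) (Suc d) (n + d) B"
  using assms
proof (induction B rule: dec_induct)
  case base
  have "stack_count j d n (j + d) = of_bool (n = Suc j * (j + d))"
    by (simp add: stack_count_def subset_sum_count_empty)
  moreover have "stack_count j d n (Suc (j + d)) =
      of_bool (n = Suc j * Suc (j + d)) + trimmed_count j d n (Suc (j + d))"
    by (simp add: stack_count_def trimmed_count_def subset_sum_count_insert subset_sum_count_empty algebra_simps)
  ultimately show ?case
    by (simp add: alt_stack_sum_def algebra_simps)
next
  case (step B)
  then show ?case
    using stack_count_Suc[OF step.hyps(1)] by (simp add: alt_stack_sum_def algebra_simps)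
qed

lemma stack_count_eq_0: "n < Suc j * m \<Longrightarrow> stack_count j d n m = 0"
  unfolding stack_count_def by (rule subset_sum_count_eq_0)

lemma alt_stack_sum_eq_0:
  assumes "n < Suc j * (j + d)"
  shows "alt_stack_sum j d n B = 0"
  unfolding alt_stack_sum_def
proof (intro sum.neutral ballI)
  fix m assume "m \<in> {j + d..B}"
  then have "Suc j * (j + d) \<le> Suc j * m" by (intro mult_le_mono2) simp
  then show "(-1)^m * int (stack_count j d n m) = 0" using assms by (simp add: stack_count_eq_0)
qed

lemma alt_stack_sum_stable:
  assumes "n \<le> B" "B \<le> B'"
  shows "alt_stack_sum j d n B' = alt_stack_sum j d n B"
  using assms(2)
proof (induction B' rule: dec_induct)
  case (step B')
  have "stack_count j d n (Suc B') = 0"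
    using assms(1) step.hyps by (intro stack_count_eq_0) (simp add: le_imp_less_Suc trans_le_add1)
  then show ?case using step by (simp add: alt_stack_sum_def)
qed simp

(* After i steps of (j, d, n) |-> (j+1, d+1, n+d) the target n has become n + d i + i(i-1)/2;
   pentagonal_hit e j d n says that at some step it equals the boundary value
   (j+1+i)(j+d+e+2i) of that step. The equation is doubled to avoid the division. *)
definition pentagonal_hit :: "nat \<Rightarrow> nat \<Rightarrow> nat \<Rightarrow> nat \<Rightarrow> bool" where
  "pentagonal_hit e j d n \<longleftrightarrow> (\<exists>i. 2 * n + 2 * d * i + i * i = 2 * (Suc j + i) * (j + d + e + 2 * i) + i)"

lemma pentagonal_hit_ge:
  assumes "pentagonal_hit e j d n" shows "Suc j * (j + d + e) \<le> n"
proof -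
  obtain i where i: "2 * n + 2 * d * i + i * i = 2 * (Suc j + i) * (j + d + e + 2 * i) + i"
    using assms unfolding pentagonal_hit_def by blast
  have "2 * (Suc j + i) * (j + d + e + 2 * i) + i
      = 2 * (Suc j * (j + d + e)) + (2 * d * i + i * i) + (4 * i * Suc j + 2 * i * (j + e) + 3 * i * i + i)"
    by (simp add: algebra_simps)
  then show ?thesis using i by linarith
qed

lemma pentagonal_hit_iff:
  "pentagonal_hit e j d n \<longleftrightarrow> n = Suc j * (j + d + e) \<or> pentagonal_hit e (Suc j) (Suc d) (n + d)"
proof -
  let ?eq = "\<lambda>j d n i. 2 * n + 2 * d * i + i * i = 2 * (Suc j + i) * (j + d + e + 2 * i) + i"
  have "?eq j d n 0 \<longleftrightarrow> n = Suc j * (j + d + e)"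
    by (simp only: mult_0_right mult_0 add_0_right mult.assoc nat_mult_eq_cancel1[OF zero_less_numeral])
  moreover have "?eq j d n (Suc i) \<longleftrightarrow> ?eq (Suc j) (Suc d) (n + d) i" for i by (simp add: algebra_simps)
  ultimately show ?thesis unfolding pentagonal_hit_def by (metis not0_implies_Suc)
qed

lemma of_bool_pentagonal_hit:
  "(of_bool (pentagonal_hit e j d n) :: int) =
     of_bool (n = Suc j * (j + d + e)) + of_bool (pentagonal_hit e (Suc j) (Suc d) (n + d))"
proof -
  have "Suc (Suc j) * (Suc j + Suc d + e) = Suc j * (j + d + e) + 3 * j + d + e + 4"
    by (simp add: algebra_simps)
  then have "\<not> (n = Suc j * (j + d + e) \<and> pentagonal_hit e (Suc j) (Suc d) (n + d))"
    using pentagonal_hit_ge[of e "Suc j" "Suc d" "n + d"] by linarith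
  then show ?thesis using pentagonal_hit_iff[of e j d n] by auto
qed

lemma alt_stack_sum_closed_form:
  "n \<le> B \<Longrightarrow> alt_stack_sum j d n B =
     (-1)^(j + d) * (of_bool (pentagonal_hit 0 j d n) - of_bool (pentagonal_hit 1 j d n))"
proof (induction "Suc n - Suc j * (j + d)" arbitrary: j d n B rule: less_induct)
  case less
  show ?case
  proof (cases "n < Suc j * (j + d)")
    case True
    then have "\<not> pentagonal_hit e j d n" for e
      using pentagonal_hit_ge[of e j d n] mult_le_mono2[of "j + d" "j + d + e" "Suc j"] by linarith
    then show ?thesis using alt_stack_sum_eq_0[OF True] by simp
  next
    case False
    define B' where "B' = B + n + d + j + 1"
    have B': "B \<le> B'" "n + d \<le> B'" "Suc (j + d) \<le> B'" "n < Suc j * Suc B'"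
      unfolding B'_def by (simp_all add: le_imp_less_Suc trans_le_add1)
    have "Suc (Suc j) * (Suc j + Suc d) = Suc j * (j + d) + 3 * j + d + 4"
      by (simp add: algebra_simps)
    then have "Suc (n + d) - Suc (Suc j) * (Suc j + Suc d) < Suc n - Suc j * (j + d)"
      using False by linarith
    from less.hyps[OF this B'(2)] have IH: "alt_stack_sum (Suc j) (Suc d) (n + d) B' =
      (-1)^(j + d) * (of_bool (pentagonal_hit 0 (Suc j) (Suc d) (n + d))
                      - of_bool (pentagonal_hit 1 (Suc j) (Suc d) (n + d)))"
      by simp
    have "trimmed_count j d n B' = 0"
      unfolding trimmed_count_def using B'(4) by (rule subset_sum_count_eq_0)
    then have "alt_stack_sum j d n B' =
        (-1)^(j + d) * (of_bool (n = Suc j * (j + d)) - of_bool (n = Suc j * (j + d + 1)))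
        + alt_stack_sum (Suc j) (Suc d) (n + d) B'"
      using alt_stack_sum_step[OF B'(3), of n] by simp
    moreover have "alt_stack_sum j d n B = alt_stack_sum j d n B'"
      using alt_stack_sum_stable[OF less.prems B'(1)] by simp
    ultimately show ?thesis
      unfolding IH of_bool_pentagonal_hit[of 0 j d n] of_bool_pentagonal_hit[of 1 j d n]
      by (simp add: right_diff_distrib distrib_left)
  qed
qed

section \<open>Good partitions\<close>

lemma good_partition_of_parts:
  assumes "3 \<le> a" "S \<subseteq> {2..a - 2}"
  shows "is_partition (3 * a + \<Sum>S) (a # a # a # rev (sorted_list_of_set S))"
    and "good_partition (even a) (a # a # a # rev (sorted_list_of_set S))"
proof -
  define R where "R = rev (sorted_list_of_set S)"
  have "finite S" using assms(2) finite_subset by blast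
  then have R: "set R = S" "distinct R" "sorted_wrt (\<ge>) R" "sum_list R = \<Sum>S"
    unfolding R_def by (simp_all add: sorted_wrt_rev distinct_sum_list_conv_Sum)
  have bounds: "2 \<le> x" "x + 2 \<le> a" if "x \<in> set R" for x
  proof -
    have "x \<in> {2..a - 2}" using that R(1) assms(2) by blast
    then show "2 \<le> x" "x + 2 \<le> a" using assms(1) by auto
  qed
  show "is_partition (3 * a + \<Sum>S) (a # a # a # R)"
    unfolding is_partition_def using R bounds assms(1) by fastforce
  have "R ! 0 + 2 \<le> a" "last R \<noteq> 1" if "R \<noteq> []"
    using bounds[OF nth_mem] bounds[OF last_in_set] that by fastforce+
  then show "good_partition (even a) (a # a # a # R)"
    unfolding good_partition_def using R(2) assms(1) by (auto simp: numeral_eq_Suc Suc_le_eq)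
qed

lemma good_partitionE:
  assumes "is_partition n ps" "good_partition b ps"
  obtains a S where "ps = a # a # a # rev (sorted_list_of_set S)" "3 \<le> a" "even a = b"
    "S \<subseteq> {2..a - 2}" "3 * a + \<Sum>S = n"
proof -
  obtain x y z R where "ps = x # y # z # R"
    using assms(2) unfolding good_partition_def by (metis Suc_le_length_iff numeral_3_eq_3)
  moreover have "x = y" "y = z" using assms(2) calculation unfolding good_partition_def by simp_all
  ultimately obtain a where ps: "ps = a # a # a # R" by blast
  have a: "3 \<le> a" "even a = b"
    and R: "distinct R" "R \<noteq> [] \<Longrightarrow> R ! 0 + 2 \<le> a" "R \<noteq> [] \<Longrightarrow> last R \<noteq> 1"
    using assms(2) unfolding good_partition_def ps by (auto simp: numeral_eq_Suc Suc_le_eq)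
  have sorted: "sorted_wrt (\<ge>) R" and pos: "\<forall>x\<in>set R. 0 < x \<and> x \<le> a" and sum: "3 * a + sum_list R = n"
    using assms(1) unfolding is_partition_def ps by auto
  have "rev R = sorted_list_of_set (set R)"
    using R(1) sorted by (intro sorted_distinct_set_unique) (simp_all add: sorted_wrt_rev)
  then have "ps = a # a # a # rev (sorted_list_of_set (set R))" using ps by (metis rev_rev_ident)
  moreover have "set R \<subseteq> {2..a - 2}"
  proof
    fix x assume x: "x \<in> set R"
    then have "R \<noteq> []" by auto
    have "x \<le> R ! 0" using x sorted by (cases R) auto
    moreover have "last R \<le> x"
    proof -
      have "sorted_wrt (\<ge>) (butlast R @ [last R])" "x \<in> set (butlast R @ [last R])"
        using sorted x by (simp_all only: append_butlast_last_id[OF \<open>R \<noteq> []\<close>])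
      then show ?thesis by (auto simp: sorted_wrt_append)
    qed
    ultimately show "x \<in> {2..a - 2}" using R(2,3) pos last_in_set[OF \<open>R \<noteq> []\<close>] by fastforce
  qed
  moreover have "3 * a + \<Sum>(set R) = n" using sum R(1) by (simp add: distinct_sum_list_conv_Sum)
  ultimately show ?thesis using a that by blast
qed

lemma card_good_partitions:
  "card {ps. is_partition n ps \<and> good_partition b ps} =
     (\<Sum>a | a \<in> {3..n} \<and> even a = b. subset_sum_count {2..a - 2} (3 * a) n)"
proof -
  define A where "A = {a \<in> {3..n}. even a = b}"
  define F where "F a = {S. S \<subseteq> {2..a - 2} \<and> 3 * a + \<Sum>S = n}" for a
  define parts :: "nat \<times> nat set \<Rightarrow> nat list"
    where "parts = (\<lambda>(a, S). a # a # a # rev (sorted_list_of_set S))"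
  have "{ps. is_partition n ps \<and> good_partition b ps} = parts ` Sigma A F"
  proof (intro equalityI subsetI)
    fix ps assume "ps \<in> {ps. is_partition n ps \<and> good_partition b ps}"
    then obtain a S where "ps = parts (a, S)" "3 \<le> a" "even a = b" "S \<subseteq> {2..a - 2}" "3 * a + \<Sum>S = n"
      unfolding parts_def by (auto elim: good_partitionE)
    then show "ps \<in> parts ` Sigma A F" unfolding A_def F_def by force
  next
    fix ps assume "ps \<in> parts ` Sigma A F"
    then show "ps \<in> {ps. is_partition n ps \<and> good_partition b ps}"
      unfolding A_def F_def parts_def using good_partition_of_parts by force
  qed
  moreover have "inj_on parts (Sigma A F)"
    unfolding parts_def F_def
    by (rule inj_onI) (auto dest: sorted_list_of_set_inject intro: finite_subset)
  moreover have "finite A" "\<forall>a \<in> A. finite (F a)"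
    unfolding A_def F_def by (auto intro: finite_subset)
  ultimately show ?thesis
    unfolding A_def[symmetric] by (simp add: card_image card_SigmaI subset_sum_count_def F_def)
qed

lemma e_count_minus_o_count:
  "int (e_count n) - int (o_count n) = (\<Sum>a = 3..n. (-1)^a * int (subset_sum_count {2..a - 2} (3 * a) n))"
proof -
  let ?c = "\<lambda>a. int (subset_sum_count {2..a - 2} (3 * a) n)"
  have "(\<Sum>a = 3..n. (-1)^a * ?c a) = (\<Sum>a = 3..n. if even a then ?c a else - ?c a)"
    by (rule sum.cong) auto
  also have "\<dots> = (\<Sum>a \<in> {3..n} \<inter> {a. even a}. ?c a) + (\<Sum>a \<in> {3..n} \<inter> - {a. even a}. - ?c a)"
    by (rule sum.If_cases) simp
  also have "\<dots> = int (e_count n) - int (o_count n)"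
  proof -
    have "{a. a \<in> {3..n} \<and> even a = True} = {3..n} \<inter> {a. even a}"
      "{a. a \<in> {3..n} \<and> even a = False} = {3..n} \<inter> - {a. even a}" by auto
    then show ?thesis
      unfolding e_count_def o_count_def card_good_partitions of_nat_sum by (simp add: sum_negf)
  qed
  finally show ?thesis ..
qed

lemma e_count_minus_o_count_alt_stack_sums:
  assumes "3 \<le> n"
  shows "int (e_count n) - int (o_count n) =
    alt_stack_sum 2 2 n n + alt_stack_sum 2 2 (n - 2) n - of_bool (n = 9)"
proof -
  have "n - 2 + 2 = n" using assms by simp
  have split_2: "subset_sum_count {2..a - 2} (3 * a) n = stack_count 2 2 n a + stack_count 2 2 (n - 2) a"
    if "4 \<le> a" for a
  proof -
    have "{2..a - 2} = insert 2 {3..a - 2}" using that by auto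
    then have "subset_sum_count {2..a - 2} (3 * a) n =
        subset_sum_count {3..a - 2} (3 * a) n + subset_sum_count {3..a - 2} (3 * a + 2) n"
      by (simp add: subset_sum_count_insert)
    moreover have "subset_sum_count {3..a - 2} (3 * a + 2) n = subset_sum_count {3..a - 2} (3 * a) (n - 2)"
      using subset_sum_count_add[of "{3..a - 2}" "3 * a" 2 "n - 2"] \<open>n - 2 + 2 = n\<close> by simp
    ultimately show ?thesis by (simp add: stack_count_def numeral_3_eq_3)
  qed
  have "{3..n} = insert 3 {4..n}" using assms by auto
  then have "int (e_count n) - int (o_count n) =
      - of_bool (n = 9) + (\<Sum>a = 4..n. (-1)^a * int (subset_sum_count {2..a - 2} (3 * a) n))"
    unfolding e_count_minus_o_count by (simp add: subset_sum_count_empty)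
  also have "(\<Sum>a = 4..n. (-1)^a * int (subset_sum_count {2..a - 2} (3 * a) n)) =
      alt_stack_sum 2 2 n n + alt_stack_sum 2 2 (n - 2) n"
    unfolding alt_stack_sum_def sum.distrib[symmetric] by (rule sum.cong) (simp_all add: split_2 distrib_left)
  finally show ?thesis by simp
qed

section \<open>The values P1, P2, P3, P4\<close>

lemma ex_int_ge_iff_ex_nat: "(\<exists>t \<ge> (k::int). P t) \<longleftrightarrow> (\<exists>i::nat. P (int i + k))"
  by (metis add.commute le_add_same_cancel2 of_nat_0_le_iff zle_iff_zadd)

lemma ex_int_ge_split: "(\<exists>t \<ge> (k::int). P t) \<longleftrightarrow> P k \<or> (\<exists>t \<ge> k. P (t + 1))"
proof
  assume "\<exists>t \<ge> k. P t"
  then obtain t where "t \<ge> k" "P t" by blast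
  then show "P k \<or> (\<exists>t \<ge> k. P (t + 1))" by (cases "t = k") (auto intro!: exI[of _ "t - 1"])
next
  assume "P k \<or> (\<exists>t \<ge> k. P (t + 1))"
  then show "\<exists>t \<ge> k. P t" by (metis add_increasing2 order_refl zero_less_one order_less_imp_le)
qed

lemma pentagonal_hit_2_2_iff:
  "pentagonal_hit e 2 2 m \<longleftrightarrow> (\<exists>t \<ge> 2. 2 * int m = 3 * t^2 + (5 + 2 * int e) * t + 2 + 2 * int e)"
proof -
  have "2 * m + 2 * 2 * i + i * i = 2 * (Suc 2 + i) * (2 + 2 + e + 2 * i) + i
    \<longleftrightarrow> 2 * int m = 3 * (int i + 2)^2 + (5 + 2 * int e) * (int i + 2) + 2 + 2 * int e" for i
  proof -
    have "2 * (Suc 2 + i) * (2 + 2 + e + 2 * i) + i =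
        (2 * 2 * i + i * i) + (3 * i * i + (17 + 2 * e) * i + 24 + 6 * e)"
      by (simp add: algebra_simps)
    moreover have "3 * (int i + 2)^2 + (5 + 2 * int e) * (int i + 2) + 2 + 2 * int e =
        int (3 * i * i + (17 + 2 * e) * i + 24 + 6 * e)"
      by (simp add: algebra_simps power2_eq_square)
    ultimately show ?thesis by linarith
  qed
  then show ?thesis unfolding pentagonal_hit_def ex_int_ge_iff_ex_nat by presburger
qed

lemma P_doubled:
  "2 * P1 t = 3 * t^2 + t + 4" "2 * P2 t = 3 * t^2 + 5 * t + 2"
  "2 * P3 t = 3 * t^2 + 5 * t + 6" "2 * P4 t = 3 * t^2 + 7 * t + 4"
proof -
  have "even (t * (3 * t + 1))" "even (t * (3 * t + 5))" "even (t * (3 * t + 7))" by simp_all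
  then show "2 * P1 t = 3 * t^2 + t + 4" "2 * P2 t = 3 * t^2 + 5 * t + 2"
    "2 * P3 t = 3 * t^2 + 5 * t + 6" "2 * P4 t = 3 * t^2 + 7 * t + 4"
    unfolding P1_def P2_def P3_def P4_def by (auto simp: algebra_simps power2_eq_square elim!: evenE)
qed

lemma P3_eq_P2_add_2: "P3 t = P2 t + 2"
  using P_doubled(2,3)[of t] by linarith

lemma P1_add_1_eq_P4_add_2: "P1 (t + 1) = P4 t + 2"
  using P_doubled(1)[of "t + 1"] P_doubled(4)[of t] by (simp add: power2_eq_square algebra_simps)

lemma pentagonal_hit_P2: "pentagonal_hit 0 2 2 m \<longleftrightarrow> (\<exists>t \<ge> 2. int m = P2 t)"
proof -
  have "pentagonal_hit 0 2 2 m \<longleftrightarrow> (\<exists>t \<ge> 2. 2 * int m = 2 * P2 t)"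
    unfolding pentagonal_hit_2_2_iff P_doubled by simp
  then show ?thesis by simp
qed

lemma pentagonal_hit_P4: "pentagonal_hit 1 2 2 m \<longleftrightarrow> (\<exists>t \<ge> 2. int m = P4 t)"
proof -
  have "pentagonal_hit 1 2 2 m \<longleftrightarrow> (\<exists>t \<ge> 2. 2 * int m = 2 * P4 t)"
    unfolding pentagonal_hit_2_2_iff P_doubled by (simp add: algebra_simps)
  then show ?thesis by simp
qed

lemma e_count_minus_o_count_eq:
  assumes "3 \<le> n"
  shows "int (e_count n) - int (o_count n) =
    of_bool (\<exists>t \<ge> 2. int n = P2 t) + of_bool (\<exists>t \<ge> 2. int n = P3 t)
    - of_bool (\<exists>t \<ge> 2. int n = P4 t) - of_bool (\<exists>t \<ge> 2. int n = P1 t)"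
proof -
  have n_2: "int (n - 2) = int n - 2" using assms by simp
  have "alt_stack_sum 2 2 n n = of_bool (\<exists>t \<ge> 2. int n = P2 t) - of_bool (\<exists>t \<ge> 2. int n = P4 t)"
    using alt_stack_sum_closed_form[of n n 2 2] unfolding pentagonal_hit_P2 pentagonal_hit_P4 by simp
  moreover have "alt_stack_sum 2 2 (n - 2) n =
      of_bool (\<exists>t \<ge> 2. int n = P3 t) - of_bool (pentagonal_hit 1 2 2 (n - 2))"
    using alt_stack_sum_closed_form[of "n - 2" n 2 2] unfolding pentagonal_hit_P2 n_2
    by (simp add: P3_eq_P2_add_2 algebra_simps)
  moreover have "of_bool (n = 9) + of_bool (pentagonal_hit 1 2 2 (n - 2)) =
      (of_bool (\<exists>t \<ge> 2. int n = P1 t) :: int)"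
  proof -
    have "pentagonal_hit 1 2 2 (n - 2) \<longleftrightarrow> (\<exists>t \<ge> 2. int n = P1 (t + 1))"
      unfolding pentagonal_hit_P4 n_2 by (simp add: P1_add_1_eq_P4_add_2 algebra_simps)
    moreover have "P1 2 = 9" by (simp add: P1_def)
    ultimately have "(\<exists>t \<ge> 2. int n = P1 t) \<longleftrightarrow> n = 9 \<or> pentagonal_hit 1 2 2 (n - 2)"
      by (subst ex_int_ge_split) simp
    moreover have "pentagonal_hit 1 2 2 (n - 2) \<Longrightarrow> n \<noteq> 9"
      using pentagonal_hit_ge[of 1 2 2 "n - 2"] by simp
    ultimately show ?thesis by auto
  qed
  ultimately show ?thesis using e_count_minus_o_count_alt_stack_sums[OF assms] by linarith
qed

lemma quadratics_interleaved_neq: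
  fixes a b a' b' s t :: int
  assumes "0 \<le> a" "0 \<le> a'" "2 \<le> t" "2 \<le> s"
    and below: "\<And>u. 2 \<le> u \<Longrightarrow> 3 * (u - 1)^2 + a * (u - 1) + b < 3 * u^2 + a' * u + b'"
    and above: "\<And>u. 2 \<le> u \<Longrightarrow> 3 * (u - 1)^2 + a' * (u - 1) + b' < 3 * u^2 + a * u + b"
    and diagonal: "\<And>u. 2 \<le> u \<Longrightarrow> a * u + b \<noteq> a' * u + b'"
  shows "3 * t^2 + a * t + b \<noteq> 3 * s^2 + a' * s + b'"
proof -
  have mono: "3 * x^2 + c * x \<le> 3 * y^2 + c * y" if "0 \<le> x" "x \<le> y" "0 \<le> c" for x y c :: int
    using that power_mono[of x y 2] mult_left_mono[of x y c] by linarith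
  consider "t < s" | "s < t" | "t = s" by linarith
  then show ?thesis
  proof cases
    case 1
    then show ?thesis using mono[of t "s - 1" a] below[of s] assms(1,3,4) by linarith
  next
    case 2
    then show ?thesis using mono[of s "t - 1" a'] above[of t] assms(2,3,4) by linarith
  qed (use diagonal assms(3) in auto)
qed

lemma P_values_distinct:
  assumes "2 \<le> t" "2 \<le> s"
  shows "P1 t \<noteq> P2 s" "P1 t \<noteq> P3 s" "P1 t \<noteq> P4 s" "P2 t \<noteq> P3 s" "P2 t \<noteq> P4 s" "P3 t \<noteq> P4 s"
proof -
  have "3 * t^2 + 1 * t + 4 \<noteq> 3 * s^2 + 5 * s + 2" "3 * t^2 + 1 * t + 4 \<noteq> 3 * s^2 + 5 * s + 6"
    "3 * t^2 + 1 * t + 4 \<noteq> 3 * s^2 + 7 * s + 4" "3 * t^2 + 5 * t + 2 \<noteq> 3 * s^2 + 5 * s + 6"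
    "3 * t^2 + 5 * t + 2 \<noteq> 3 * s^2 + 7 * s + 4" "3 * t^2 + 5 * t + 6 \<noteq> 3 * s^2 + 7 * s + 4"
    by (rule quadratics_interleaved_neq; simp add: assms power2_eq_square algebra_simps)+
  then show "P1 t \<noteq> P2 s" "P1 t \<noteq> P3 s" "P1 t \<noteq> P4 s" "P2 t \<noteq> P3 s" "P2 t \<noteq> P4 s" "P3 t \<noteq> P4 s"
    using P_doubled[of t] P_doubled[of s] by auto
qed

theorem corollary4p8:
  fixes n :: nat
  assumes "n \<ge> 6"
  shows "((\<forall>t::int. t \<ge> 2 \<longrightarrow> int n \<notin> {P1 t, P2 t, P3 t, P4 t})
           \<longrightarrow> e_count n = o_count n) \<and>
         ((\<exists>t::int. t \<ge> 2 \<and> (int n = P1 t \<or> int n = P4 t))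
           \<longrightarrow> int (e_count n) = int (o_count n) - 1) \<and>
         ((\<exists>t::int. t \<ge> 2 \<and> (int n = P2 t \<or> int n = P3 t))
           \<longrightarrow> e_count n = o_count n + 1)"
proof -
  define hit where "hit P \<longleftrightarrow> (\<exists>t::int. t \<ge> 2 \<and> int n = P t)" for P
  have diff: "int (e_count n) - int (o_count n) =
      of_bool (hit P2) + of_bool (hit P3) - of_bool (hit P4) - of_bool (hit P1)"
    using e_count_minus_o_count_eq assms unfolding hit_def by simp
  have P1_excludes: "\<not> hit P2 \<and> \<not> hit P3 \<and> \<not> hit P4" if "hit P1"
    using that P_values_distinct(1-3) unfolding hit_def by metis
  have P2_excludes: "\<not> hit P3 \<and> \<not> hit P4" if "hit P2"
    using that P_values_distinct(4,5) unfolding hit_def by metis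
  have P3_excludes: "\<not> hit P4" if "hit P3"
    using that P_values_distinct(6) unfolding hit_def by metis
  show ?thesis
  proof (intro conjI impI)
    assume "\<forall>t::int. t \<ge> 2 \<longrightarrow> int n \<notin> {P1 t, P2 t, P3 t, P4 t}"
    then have "\<not> hit P1" "\<not> hit P2" "\<not> hit P3" "\<not> hit P4" unfolding hit_def by auto
    then show "e_count n = o_count n" using diff by simp
  next
    assume "\<exists>t::int. t \<ge> 2 \<and> (int n = P1 t \<or> int n = P4 t)"
    then have "hit P1 \<or> hit P4" unfolding hit_def by blast
    then have "\<not> hit P2" "\<not> hit P3" "hit P1 \<longleftrightarrow> \<not> hit P4"
      using P1_excludes P2_excludes P3_excludes by blast+
    then show "int (e_count n) = int (o_count n) - 1" using diff by (cases "hit P4") simp_all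
  next
    assume "\<exists>t::int. t \<ge> 2 \<and> (int n = P2 t \<or> int n = P3 t)"
    then have "hit P2 \<or> hit P3" unfolding hit_def by blast
    then have "\<not> hit P1" "\<not> hit P4" "hit P2 \<longleftrightarrow> \<not> hit P3"
      using P1_excludes P2_excludes P3_excludes by blast+
    then show "e_count n = o_count n + 1" using diff by (cases "hit P3") simp_all
  qed
qed

end
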